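(* Let $q=p^m$ with $p$ prime, let $\gamma$ be such that $\mathbb{F}_q=\mathbb{F}_p[\gamma]$, and let $t=\lfloor\frac{m-1}{4}\rfloor$. Let $n,k$ be integers with $5\le k\le\frac{n-2}{2}$ and $n\le p^t$. Let $g_1(x),\dots,g_n(x)\in\mathbb{F}_p[x]$ be pairwise distinct monic polynomials of degree exactly $t$, and set $\alpha_i=g_i(\gamma)$ for $1\le i\le n$. Let $C_{k-1,k-2}$ be the linear code over $\mathbb{F}_q$ generated by the $k\times n$ matrix whose rows are $(\alpha_1^{e},\dots,\alpha_n^{e})$ for $e=0,1,\dots,k-3,k,k+1$. If $p\nmid \frac{1}{12}k^2(k^2-1)$, then $C_{k-1,k-2}$ is an $[n,k]$ non-GRS MDS code over $\mathbb{F}_q$.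
   Context: Convention: $0^0=1$. Note $\frac{1}{12}k^2(k^2-1)$ is an integer. A linear code is MDS if its parameters $[n,k,d]$ satisfy $d=n-k+1$. For pairwise distinct $a_1,\dots,a_n\in\mathbb{F}_q$ and $w\in(\mathbb{F}_q^* )^n$, the generalized Reed–Solomon code is $GRS(n,k,\{a_i\},w)=\{(w_1f(a_1),\dots,w_nf(a_n)) : f\in\mathbb{F}_q[x],\ \deg f\le k-1\}$. Two codes are (monomially) equivalent if one is obtained from the other by a permutation of coordinates and multiplication of coordinates by nonzero scalars. A non-GRS MDS code is an MDS code not equivalent to any GRS code. *)

theory Defs
  imports "HOL-Computational_Algebra.Polynomial" "HOL-Library.Function_Algebras" "HOL-Combinatorics.Permutations" "HOL-Library.Cardinality"
begin

text \<open>Words of length n over a field are functions nat => 'a that vanish outside {..<n}.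
A code of length n is a set of such words.\<close>

definition cscale :: "'a::field \<Rightarrow> (nat \<Rightarrow> 'a) \<Rightarrow> (nat \<Rightarrow> 'a)" where
  "cscale c x = (\<lambda>i. c * x i)"

definition code_dim :: "(nat \<Rightarrow> 'a::field) set \<Rightarrow> nat" where
  "code_dim C = vector_space.dim cscale C"

definition hdist :: "nat \<Rightarrow> (nat \<Rightarrow> 'a::zero) \<Rightarrow> (nat \<Rightarrow> 'a) \<Rightarrow> nat" where
  "hdist n x y = card {i. i < n \<and> x i \<noteq> y i}"

definition min_dist :: "nat \<Rightarrow> (nat \<Rightarrow> 'a::zero) set \<Rightarrow> nat" where
  "min_dist n C = Min {hdist n x y | x y. x \<in> C \<and> y \<in> C \<and> x \<noteq> y}"

definition gen_code :: "nat \<Rightarrow> nat \<Rightarrow> (nat \<Rightarrow> nat \<Rightarrow> 'a::field) \<Rightarrow> (nat \<Rightarrow> 'a) set" where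
  "gen_code n K row = {(\<lambda>i. if i < n then (\<Sum>j<K. c j * row j i) else 0) | c. True}"

definition is_linear_code :: "nat \<Rightarrow> (nat \<Rightarrow> 'a::field) set \<Rightarrow> bool" where
  "is_linear_code n C \<longleftrightarrow> (\<forall>x\<in>C. \<forall>i\<ge>n. x i = 0) \<and> 0 \<in> C \<and>
      (\<forall>x\<in>C. \<forall>y\<in>C. x + y \<in> C) \<and> (\<forall>c. \<forall>x\<in>C. cscale c x \<in> C)"

definition is_MDS :: "nat \<Rightarrow> nat \<Rightarrow> (nat \<Rightarrow> 'a::field) set \<Rightarrow> bool" where
  "is_MDS n k C \<longleftrightarrow> is_linear_code n C \<and> code_dim C = k \<and> min_dist n C = n - k + 1"

definition GRS :: "nat \<Rightarrow> nat \<Rightarrow> (nat \<Rightarrow> 'a::field) \<Rightarrow> (nat \<Rightarrow> 'a) \<Rightarrow> (nat \<Rightarrow> 'a) set" where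
  "GRS n k a w = {(\<lambda>i. if i < n then w i * poly f (a i) else 0) | f. f = 0 \<or> degree f < k}"

definition is_GRS_params :: "nat \<Rightarrow> (nat \<Rightarrow> 'a::field) \<Rightarrow> (nat \<Rightarrow> 'a) \<Rightarrow> bool" where
  "is_GRS_params n a w \<longleftrightarrow> inj_on a {..<n} \<and> (\<forall>i<n. w i \<noteq> 0)"

definition code_equiv :: "nat \<Rightarrow> (nat \<Rightarrow> 'a::field) set \<Rightarrow> (nat \<Rightarrow> 'a) set \<Rightarrow> bool" where
  "code_equiv n C D \<longleftrightarrow> (\<exists>\<sigma> c. \<sigma> permutes {..<n} \<and> (\<forall>i<n. c i \<noteq> 0) \<and>
      D = (\<lambda>x. \<lambda>i. if i < n then c i * x (\<sigma> i) else 0) ` C)"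

definition non_GRS :: "nat \<Rightarrow> (nat \<Rightarrow> 'a::field) set \<Rightarrow> bool" where
  "non_GRS n C \<longleftrightarrow> \<not> (\<exists>k' a w. is_GRS_params n a w \<and> code_equiv n C (GRS n k' a w))"

definition prime_subfield :: "'a::field set" where
  "prime_subfield = range of_nat"

definition Fp_poly :: "'a::field poly \<Rightarrow> bool" where
  "Fp_poly f \<longleftrightarrow> (\<forall>i. coeff f i \<in> prime_subfield)"

definition generates_over_prime_field :: "'a::field \<Rightarrow> bool" where
  "generates_over_prime_field \<gamma> \<longleftrightarrow> (\<forall>x. \<exists>f. Fp_poly f \<and> poly f \<gamma> = x)"

end

theory Submission
  imports Defs
begin

(*
  Codewords are the evaluations f(alpha_i) of polynomials f = sum_j c_j x^(E j), of degree at
  most k + 1 and with vanishing coefficients at x^(k-1) and x^(k-2).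

  MDS: if f vanished at k of the points, then f = P h with P the product of the k linear factors
  and deg h <= 1, and the two vanishing coefficients form a linear system for h with determinant
  c_2^2 - c_1 c_3, where c_r is the coefficient of x^(k-r) in P.  Since alpha_i = g_i(gamma), this
  determinant is Q(gamma) for a polynomial Q over F_p of degree at most 4t < m whose coefficient
  of x^(4t) is binom(k,2)^2 - k binom(k,3) = k^2 (k^2 - 1) / 12, nonzero mod p.  As gamma has
  degree m over F_p, Q(gamma) is nonzero, hence h = 0: nonzero codewords have fewer than k zeros.

  Non-GRS: componentwise products of two words of a GRS code of dimension k lie in a GRS code of
  dimension 2k - 1.  Here the products of the generating rows give all monomials x^e with
  e < 2k - 1 or e in {2k, 2k + 1}, that is 2k + 1 independent words of length n >= 2k + 2;
  counting the words of both spaces yields a contradiction.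
*)

section \<open>The prime field and the generator\<close>

text \<open>In a field of characteristic \<open>p\<close> the set \<open>\<int>\<close> is the prime field \<open>\<bbbF>\<^sub>p\<close>, so
  polynomials with coefficients in \<open>\<int>\<close> model \<open>\<bbbF>\<^sub>p[x]\<close>.\<close>

definition Ints_coeffs :: "'a::comm_ring_1 poly \<Rightarrow> bool" where
  "Ints_coeffs f \<longleftrightarrow> (\<forall>i. coeff f i \<in> \<int>)"

lemma Ints_coeffs_uminus: "Ints_coeffs f \<Longrightarrow> Ints_coeffs (- f)"
  by (simp add: Ints_coeffs_def)

lemma Ints_coeffs_diff: "Ints_coeffs f \<Longrightarrow> Ints_coeffs g \<Longrightarrow> Ints_coeffs (f - g)"
  by (simp add: Ints_coeffs_def)

lemma Ints_coeffs_mult: "Ints_coeffs f \<Longrightarrow> Ints_coeffs g \<Longrightarrow> Ints_coeffs (f * g)"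
  by (auto simp: Ints_coeffs_def coeff_mult intro!: Ints_sum Ints_mult)

lemma Ints_coeffs_smult: "c \<in> \<int> \<Longrightarrow> Ints_coeffs f \<Longrightarrow> Ints_coeffs (smult c f)"
  by (simp add: Ints_coeffs_def)

lemma Ints_coeffs_monom: "c \<in> \<int> \<Longrightarrow> Ints_coeffs (monom c n)"
  by (simp add: Ints_coeffs_def coeff_monom)

lemma Fp_poly_imp_Ints_coeffs: "Fp_poly f \<Longrightarrow> Ints_coeffs f"
  by (metis Fp_poly_def Ints_coeffs_def Ints_of_nat prime_subfield_def rangeE)

lemma Ints_subset_of_nat_lessThan_CHAR:
  assumes "CHAR('a::comm_ring_1) > 0"
  shows "(\<int> :: 'a set) \<subseteq> of_nat ` {..<CHAR('a)}"
proof
  fix x :: 'a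
  assume "x \<in> \<int>"
  then obtain z where x: "x = of_int z" by (auto elim: Ints_cases)
  define c where "c = int CHAR('a)"
  have "x = of_int (z mod c) + of_int c * of_int (z div c)"
    unfolding x by (metis mod_mult_div_eq of_int_add of_int_mult)
  also have "\<dots> = of_nat (nat (z mod c))"
    using assms by (simp add: c_def)
  finally have "x = of_nat (nat (z mod c))" .
  moreover have "nat (z mod c) < CHAR('a)"
    using assms by (simp add: c_def nat_less_iff)
  ultimately show "x \<in> of_nat ` {..<CHAR('a)}"
    by blast
qed

lemma card_Ints_le_CHAR:
  assumes "CHAR('a::comm_ring_1) > 0"
  shows "card (\<int> :: 'a set) \<le> CHAR('a)"
  using card_mono[OF _ Ints_subset_of_nat_lessThan_CHAR[OF assms]]
    card_image_le[of "{..<CHAR('a)}" "of_nat :: nat \<Rightarrow> 'a"] by simp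

lemma Ints_inverse_finite_field:
  fixes x :: "'a::{finite,field}"
  assumes "x \<in> \<int>"
  shows "inverse x \<in> \<int>"
proof (cases "x = 0")
  case False
  have "(\<lambda>y. x * y) ` \<int> = \<int>"
    by (rule endo_inj_surj) (use assms False in \<open>auto simp: inj_on_def\<close>)
  then obtain y where "y \<in> \<int>" "x * y = 1"
    by (metis Ints_1 imageE)
  then show ?thesis
    using False by (metis field_class.field_inverse mult.left_commute mult_1_right)
qed simp

lemma Ints_coeffs_reduce_at_root:
  fixes Q :: "'a::comm_ring_1 poly"
  assumes Q: "Ints_coeffs Q" "lead_coeff Q = 1" "poly Q \<gamma> = 0" and f: "Ints_coeffs f"
  shows "\<exists>r. Ints_coeffs r \<and> degree r < degree Q \<and> poly r \<gamma> = poly f \<gamma>"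
  using f
proof (induction "degree f" arbitrary: f rule: less_induct)
  case less
  show ?case
  proof (cases "degree f < degree Q")
    case True
    then show ?thesis using less.prems by blast
  next
    case False
    have "degree Q > 0"
    proof (rule ccontr)
      assume "\<not> degree Q > 0"
      then obtain a where "Q = [:a:]"
        by (metis degree_eq_zeroE gr0I)
      then show False
        using Q(2,3) by simp
    qed
    define f' where "f' = f - monom (lead_coeff f) (degree f - degree Q) * Q"
    have "degree (monom (lead_coeff f) (degree f - degree Q) * Q) \<le> degree f"
      using degree_mult_le[of "monom (lead_coeff f) (degree f - degree Q)" Q]
        degree_monom_le[of "lead_coeff f" "degree f - degree Q"] False by linarith
    then have "degree f' \<le> degree f"
      unfolding f'_def by (meson degree_diff_le order_refl)
    moreover have "coeff f' (degree f) = 0"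
      unfolding f'_def using False Q(2) by (simp add: coeff_monom_mult)
    moreover have "degree f' \<noteq> degree f"
    proof
      assume deg: "degree f' = degree f"
      with \<open>coeff f' (degree f) = 0\<close> have "f' = 0"
        by (metis leading_coeff_0_iff)
      then show False
        using deg False \<open>degree Q > 0\<close> by simp
    qed
    ultimately have "degree f' < degree f"
      by simp
    moreover have "Ints_coeffs f'"
      unfolding f'_def using less.prems Q(1)
      by (intro Ints_coeffs_diff Ints_coeffs_mult Ints_coeffs_monom) (auto simp: Ints_coeffs_def)
    ultimately obtain r where "Ints_coeffs r" "degree r < degree Q" "poly r \<gamma> = poly f' \<gamma>"
      using less.hyps by blast
    moreover have "poly f' \<gamma> = poly f \<gamma>"
      unfolding f'_def using Q(3) by simp
    ultimately show ?thesis by auto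
  qed
qed

lemma poly_at_generator_nonzero:
  fixes \<gamma> :: "'a::{finite,field}"
  assumes "prime p" "CHAR('a) = p" "CARD('a) = p ^ m" "generates_over_prime_field \<gamma>"
    and Q: "Ints_coeffs Q" "Q \<noteq> 0" "degree Q < m"
  shows "poly Q \<gamma> \<noteq> 0"
proof
  assume root: "poly Q \<gamma> = 0"
  define d where "d = degree Q"
  define Q1 where "Q1 = smult (inverse (lead_coeff Q)) Q"
  have "lead_coeff Q \<in> \<int>"
    using Q(1) by (simp add: Ints_coeffs_def)
  then have Q1: "Ints_coeffs Q1"
    unfolding Q1_def by (intro Ints_coeffs_smult Ints_inverse_finite_field Q(1))
  have Q1': "lead_coeff Q1 = 1" "poly Q1 \<gamma> = 0" "degree Q1 = d"
    using Q(2) root by (simp_all add: Q1_def d_def)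
  have "(UNIV :: 'a set) \<subseteq> (\<lambda>c. \<Sum>i<d. c i * \<gamma> ^ i) ` PiE {..<d} (\<lambda>_. \<int>)"
  proof
    fix x :: 'a
    obtain f where "Fp_poly f" "poly f \<gamma> = x"
      using assms(4) unfolding generates_over_prime_field_def by blast
    then obtain r where r: "Ints_coeffs r" "degree r < d" "poly r \<gamma> = x"
      using Ints_coeffs_reduce_at_root[OF Q1 Q1'(1,2)] Q1'(3) Fp_poly_imp_Ints_coeffs by metis
    have "x = (\<Sum>i\<le>degree r. coeff r i * \<gamma> ^ i)"
      using r(3) by (simp add: poly_altdef)
    also have "\<dots> = (\<Sum>i<d. restrict (coeff r) {..<d} i * \<gamma> ^ i)"
      by (rule sum.mono_neutral_cong_left) (use r(2) in \<open>auto simp: coeff_eq_0\<close>)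
    moreover have "restrict (coeff r) {..<d} \<in> PiE {..<d} (\<lambda>_. \<int>)"
      using r(1) by (auto simp: Ints_coeffs_def)
    ultimately show "x \<in> (\<lambda>c. \<Sum>i<d. c i * \<gamma> ^ i) ` PiE {..<d} (\<lambda>_. \<int>)"
      by blast
  qed
  then have "p ^ m \<le> card ((\<lambda>c. \<Sum>i<d. c i * \<gamma> ^ i) ` PiE {..<d} (\<lambda>_. \<int>))"
    unfolding assms(3)[symmetric] by (rule card_mono[OF finite])
  also have "\<dots> \<le> card (PiE {..<d} (\<lambda>_. (\<int> :: 'a set)))"
    by (rule card_image_le) (auto intro!: finite_PiE)
  also have "\<dots> = card (\<int> :: 'a set) ^ d"
    by (simp add: card_PiE)
  also have "\<dots> \<le> p ^ d"
    using card_Ints_le_CHAR[where 'a = 'a] assms(1,2) by (simp add: prime_gt_0_nat power_mono)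
  finally have "p ^ m \<le> p ^ d" .
  then show False
    using Q(3) prime_gt_1_nat[OF assms(1)] by (simp add: d_def)
qed

lemma inj_on_poly_at_generator:
  fixes \<gamma> :: "'a::{finite,field}"
  assumes gen: "prime p" "CHAR('a) = p" "CARD('a) = p ^ m" "generates_over_prime_field \<gamma>"
    and "t < m" and g: "\<And>i. i \<in> A \<Longrightarrow> Ints_coeffs (g i) \<and> degree (g i) \<le> t \<and> coeff (g i) t = 1"
    and "inj_on g A"
  shows "inj_on (\<lambda>i. poly (g i) \<gamma>) A"
proof (rule inj_onI, rule ccontr)
  fix i j
  assume ij: "i \<in> A" "j \<in> A" "poly (g i) \<gamma> = poly (g j) \<gamma>" "i \<noteq> j"
  define D where "D = g i - g j"
  have "D \<noteq> 0"
    using \<open>inj_on g A\<close> ij by (auto simp: D_def inj_on_def)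
  moreover have "degree D < m"
  proof -
    have "degree D \<le> t" "coeff D t = 0"
      using g[OF ij(1)] g[OF ij(2)] by (auto simp: D_def intro: degree_diff_le)
    then have "degree D < t \<or> D = 0"
      by (metis le_neq_implies_less leading_coeff_0_iff)
    then show ?thesis
      using \<open>t < m\<close> \<open>D \<noteq> 0\<close> by linarith
  qed
  moreover have "Ints_coeffs D"
    using g[OF ij(1)] g[OF ij(2)] by (simp add: D_def Ints_coeffs_diff)
  ultimately have "poly D \<gamma> \<noteq> 0"
    using poly_at_generator_nonzero[OF gen] by blast
  then show False
    using ij(3) by (simp add: D_def)
qed


section \<open>Coefficients of a product of linear factors\<close>

lemma coeff_mult_at_degree_bounds:
  assumes "degree A \<le> a" "degree B \<le> b"
  shows "coeff (A * B) (a + b) = coeff A a * coeff B b"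
proof (cases "degree A = a \<and> degree B = b")
  case True
  then show ?thesis by (metis coeff_mult_degree_sum)
next
  case False
  then have "degree A < a \<or> degree B < b"
    using assms by linarith
  moreover from this have "degree (A * B) < a + b"
    using degree_mult_le[of A B] assms by linarith
  ultimately show ?thesis
    by (auto simp: coeff_eq_0)
qed

lemma coeff_linear_factor_mult:
  fixes R :: "'a::comm_ring_1 poly"
  shows "coeff ([:a, 1:] * R) j = a * coeff R j + (if j = 0 then 0 else coeff R (j - 1))"
  by (cases j) (simp_all add: mult_pCons_left)

lemma Ints_coeffs_coeff_prod_linear_factors:
  assumes "\<And>i. i \<in> S \<Longrightarrow> Ints_coeffs (g i)"
  shows "Ints_coeffs (coeff (\<Prod>i\<in>S. [:- g i, 1:]) j)"
  using assms
proof (induction S arbitrary: j rule: infinite_finite_induct)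
  case (insert i S)
  then show ?case
    unfolding prod.insert[OF insert.hyps] coeff_linear_factor_mult
    by (simp add: Ints_coeffs_diff Ints_coeffs_mult Ints_coeffs_uminus)
qed (simp_all add: Ints_coeffs_def)

lemma poly_coeff_prod_linear_factors:
  fixes g :: "'b \<Rightarrow> 'a::comm_ring_1 poly"
  shows "poly (coeff (\<Prod>i\<in>S. [:- g i, 1:]) j) x = coeff (\<Prod>i\<in>S. [:- poly (g i) x, 1:]) j"
proof (induction S arbitrary: j rule: infinite_finite_induct)
  case (insert i S)
  then show ?case
    unfolding prod.insert[OF insert.hyps] by (cases j) (simp_all add: poly_minus)
qed simp_all

lemma coeff_prod_linear_factors_top:
  fixes g :: "'b \<Rightarrow> 'a::comm_ring_1 poly"
  assumes "finite S" and g: "\<And>i. i \<in> S \<Longrightarrow> degree (g i) \<le> t \<and> coeff (g i) t = 1"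
  shows "degree (coeff (\<Prod>i\<in>S. [:- g i, 1:]) j) \<le> (card S - j) * t \<and>
    coeff (coeff (\<Prod>i\<in>S. [:- g i, 1:]) j) ((card S - j) * t) = (-1) ^ (card S - j) * of_nat (card S choose j)"
  using assms
proof (induction S arbitrary: j rule: finite_induct)
  case empty
  then show ?case by (cases j) simp_all
next
  case (insert i S)
  define R where "R = (\<Prod>i\<in>S. [:- g i, 1:])"
  define L where "L = card S"
  have IH: "degree (coeff R j) \<le> (L - j) * t \<and>
      coeff (coeff R j) ((L - j) * t) = (-1) ^ (L - j) * of_nat (L choose j)" for j
    using insert by (simp add: R_def L_def)
  have gi: "degree (- g i) \<le> t" "coeff (- g i) t = -1"
    using insert.prems by auto
  have prod: "(\<Prod>i\<in>insert i S. [:- g i, 1:]) = [:- g i, 1:] * R" "card (insert i S) = Suc L"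
    using insert.hyps by (simp_all add: R_def L_def)
  have low: "degree (- g i * coeff R j) \<le> (Suc L - j) * t \<and>
      coeff (- g i * coeff R j) ((Suc L - j) * t) = (-1) ^ (Suc L - j) * of_nat (L choose j)" for j
  proof (cases "j \<le> L")
    case True
    then have "(Suc L - j) * t = t + (L - j) * t"
      by (simp add: Suc_diff_le)
    then show ?thesis
      using degree_mult_le[of "- g i" "coeff R j"] coeff_mult_at_degree_bounds[OF gi(1) conjunct1[OF IH]]
        gi IH[of j] True by (simp add: Suc_diff_le)
  next
    case False
    have "coeff R j = 0"
      using degree_prod_sum_le[OF insert.hyps(1), of "\<lambda>i. [:- g i, 1:]"] False
      by (intro coeff_eq_0) (simp add: R_def L_def)
    then show ?thesis
      using False by (simp add: binomial_eq_0)
  qed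
  show ?case
  proof (cases j)
    case 0
    then show ?thesis
      unfolding prod coeff_linear_factor_mult using low[of 0] by simp
  next
    case (Suc j')
    have e: "(Suc L - j) * t = (L - j') * t" "Suc L - j = L - j'"
      using Suc by simp_all
    have c: "coeff ([:- g i, 1:] * R) j = - g i * coeff R j + coeff R j'"
      using Suc by (simp add: coeff_linear_factor_mult)
    show ?thesis
      unfolding prod c e using low[of j, unfolded e] IH[of j'] Suc
      by (simp add: degree_diff_le distrib_left)
  qed
qed

lemma choose_2_squared:
  assumes "2 \<le> k"
  shows "(k choose 2)\<^sup>2 = k * (k choose 3) + k\<^sup>2 * (k\<^sup>2 - 1) div 12"
proof -
  obtain j where k: "k = j + 2"
    using assms by (metis add.commute le_Suc_ex)
  have two: "2 * (k choose 2) = (j + 2) * (j + 1)"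
    using binomial_absorption[of 1 k] k by (simp add: numeral_2_eq_2)
  have "6 * (k choose 3) = 2 * (k * ((k - 1) choose 2))"
    using binomial_absorption[of 2 k] by (simp add: numeral_3_eq_3)
  also have "\<dots> = k * (2 * ((k - 1) choose 2))"
    by simp
  also have "2 * ((k - 1) choose 2) = (j + 1) * j"
    using binomial_absorption[of 1 "k - 1"] k by (simp add: numeral_2_eq_2)
  finally have three: "6 * (k choose 3) = (j + 2) * ((j + 1) * j)"
    using k by simp
  have sq: "k\<^sup>2 * (k\<^sup>2 - 1) = (j + 2) * (j + 2) * ((j + 1) * (j + 3))"
    by (simp add: k power2_eq_square algebra_simps)
  have "12 * (k choose 2)\<^sup>2 = 3 * (2 * (k choose 2)) * (2 * (k choose 2))"
    by (simp add: power2_eq_square)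
  also have "\<dots> = 2 * (j + 2) * (6 * (k choose 3)) + k\<^sup>2 * (k\<^sup>2 - 1)"
    unfolding two three sq by (simp add: algebra_simps)
  also have "\<dots> = 12 * (k * (k choose 3)) + k\<^sup>2 * (k\<^sup>2 - 1)"
    using k by simp
  finally have eq: "12 * (k choose 2)\<^sup>2 = 12 * (k * (k choose 3)) + k\<^sup>2 * (k\<^sup>2 - 1)" .
  then have "k\<^sup>2 * (k\<^sup>2 - 1) = 12 * ((k choose 2)\<^sup>2 - k * (k choose 3))"
    by linarith
  then show ?thesis
    using eq by simp
qed

lemma discriminant_at_generator_nonzero:
  fixes \<gamma> :: "'a::{finite,field}" and g :: "'b \<Rightarrow> 'a poly"
  assumes gen: "prime p" "CHAR('a) = p" "CARD('a) = p ^ m" "generates_over_prime_field \<gamma>"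
    and "4 * t < m" "finite S" "card S = k" "3 \<le> k"
    and g: "\<And>i. i \<in> S \<Longrightarrow> Ints_coeffs (g i) \<and> degree (g i) \<le> t \<and> coeff (g i) t = 1"
    and "\<not> p dvd k\<^sup>2 * (k\<^sup>2 - 1) div 12"
  defines "P \<equiv> \<Prod>i\<in>S. [:- poly (g i) \<gamma>, 1:]"
  shows "coeff P (k - 2) ^ 2 \<noteq> coeff P (k - 1) * coeff P (k - 3)"
proof -
  define R where "R = (\<Prod>i\<in>S. [:- g i, 1:])"
  define Q where "Q = coeff R (k - 2) * coeff R (k - 2) - coeff R (k - 1) * coeff R (k - 3)"
  have top: "degree (coeff R (k - r)) \<le> r * t \<and>
      coeff (coeff R (k - r)) (r * t) = (-1) ^ r * of_nat (k choose r)" if "r \<le> k" for r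
    using coeff_prod_linear_factors_top[of S g t "k - r"] g assms(6,7) that
    by (simp add: R_def binomial_symmetric[of r k])
  note Q1 = top[of 1] and Q2 = top[of 2] and Q3 = top[of 3]
  have "degree Q \<le> 4 * t"
    unfolding Q_def using Q1 Q2 Q3 \<open>3 \<le> k\<close> degree_mult_le
    by (intro degree_diff_le) (fastforce intro: order.trans)+
  then have "degree Q < m"
    using \<open>4 * t < m\<close> by linarith
  have "coeff Q (2 * t + 2 * t) = of_nat ((k choose 2)\<^sup>2) - of_nat (k * (k choose 3))"
    unfolding Q_def coeff_diff
    using coeff_mult_at_degree_bounds[of "coeff R (k - 2)" "2 * t" "coeff R (k - 2)" "2 * t"]
      coeff_mult_at_degree_bounds[of "coeff R (k - 1)" t "coeff R (k - 3)" "3 * t"] Q1 Q2 Q3 \<open>3 \<le> k\<close>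
    by (simp add: power2_eq_square algebra_simps)
  also have "\<dots> = of_nat (k\<^sup>2 * (k\<^sup>2 - 1) div 12)"
    using choose_2_squared[of k] \<open>3 \<le> k\<close> by simp
  finally have "coeff Q (2 * t + 2 * t) \<noteq> 0"
    using assms(2,10) by (simp add: of_nat_eq_0_iff_char_dvd)
  then have "Q \<noteq> 0"
    by auto
  moreover have "Ints_coeffs Q"
    unfolding Q_def R_def using g
    by (intro Ints_coeffs_diff Ints_coeffs_mult Ints_coeffs_coeff_prod_linear_factors) auto
  ultimately have "poly Q \<gamma> \<noteq> 0"
    using poly_at_generator_nonzero[OF gen] \<open>degree Q < m\<close> by blast
  then show ?thesis
    by (simp add: Q_def R_def P_def poly_coeff_prod_linear_factors power2_eq_square)
qed


section \<open>Polynomials with a gap\<close>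

lemma prod_linear_factors_dvd:
  fixes f :: "'a::idom poly"
  assumes "finite S" "inj_on \<alpha> S" "\<And>i. i \<in> S \<Longrightarrow> poly f (\<alpha> i) = 0"
  shows "(\<Prod>i\<in>S. [:- \<alpha> i, 1:]) dvd f"
  using assms
proof (induction S arbitrary: f rule: finite_induct)
  case (insert i S)
  obtain h where h: "f = [:- \<alpha> i, 1:] * h"
    using insert.prems(2) poly_eq_0_iff_dvd by blast
  have "poly h (\<alpha> s) = 0" if "s \<in> S" for s
    using insert.prems that insert.hyps(2) h by (auto simp: inj_on_def)
  then have "(\<Prod>i\<in>S. [:- \<alpha> i, 1:]) dvd h"
    using insert by auto
  then show ?case
    unfolding h prod.insert[OF insert.hyps] by (rule mult_dvd_mono[OF dvd_refl])
qed simp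

lemma linear_multiple_gap_eq_0:
  fixes P h :: "'a::field poly"
  assumes "degree h \<le> 1" "coeff (P * h) (Suc (Suc s)) = 0" "coeff (P * h) (Suc s) = 0"
    and "coeff P (Suc s) ^ 2 \<noteq> coeff P (Suc (Suc s)) * coeff P s"
  shows "h = 0"
proof -
  define c1 where "c1 = coeff P (Suc (Suc s))"
  define c2 where "c2 = coeff P (Suc s)"
  define c3 where "c3 = coeff P s"
  define a where "a = coeff h 1"
  define b where "b = coeff h 0"
  have "h = [:b, a:]"
    using assms(1) by (intro poly_eqI) (auto simp: a_def b_def coeff_pCons coeff_eq_0 split: nat.split)
  then have "coeff (P * h) (Suc n) = b * coeff P (Suc n) + a * coeff P n" for n
    by simp
  then have e: "b * c1 + a * c2 = 0" "b * c2 + a * c3 = 0"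
    using assms(2,3) by (simp_all add: c1_def c2_def c3_def)
  have D: "c2\<^sup>2 - c1 * c3 \<noteq> 0"
    using assms(4) by (simp add: c1_def c2_def c3_def)
  have "a * (c2\<^sup>2 - c1 * c3) = c2 * (b * c1 + a * c2) - c1 * (b * c2 + a * c3)"
    by (simp add: power2_eq_square algebra_simps)
  then have "a = 0"
    using D unfolding e by simp
  have "b * (c2\<^sup>2 - c1 * c3) = c2 * (b * c2 + a * c3) - c3 * (b * c1 + a * c2)"
    by (simp add: power2_eq_square algebra_simps)
  then have "b = 0"
    using D unfolding e by simp
  with \<open>a = 0\<close> \<open>h = [:b, a:]\<close> show ?thesis
    by simp
qed

definition gap_exp :: "nat \<Rightarrow> nat \<Rightarrow> nat" where
  "gap_exp k j = (if j < k - 2 then j else j + 2)"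

definition gap_poly :: "nat \<Rightarrow> (nat \<Rightarrow> 'a::comm_ring_1) \<Rightarrow> 'a poly" where
  "gap_poly k c = (\<Sum>j<k. monom (c j) (gap_exp k j))"

lemma gap_exp_eq_iff: "gap_exp k i = gap_exp k j \<longleftrightarrow> i = j"
  by (auto simp: gap_exp_def)

lemma coeff_gap_poly: "coeff (gap_poly k c) e = (\<Sum>j<k. if gap_exp k j = e then c j else 0)"
  by (simp add: gap_poly_def coeff_sum coeff_monom)

lemma coeff_gap_poly_gap_exp: "j < k \<Longrightarrow> coeff (gap_poly k c) (gap_exp k j) = c j"
  by (simp add: coeff_gap_poly gap_exp_eq_iff)

lemma coeff_gap_poly_gap: "e = k - 2 \<or> e = k - 1 \<Longrightarrow> coeff (gap_poly k c) e = 0"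
  unfolding coeff_gap_poly by (intro sum.neutral) (auto simp: gap_exp_def)

lemma degree_gap_poly: "degree (gap_poly k c) \<le> k + 1"
  by (rule degree_le) (auto simp: coeff_gap_poly gap_exp_def intro!: sum.neutral)

lemma poly_gap_poly: "poly (gap_poly k c) x = (\<Sum>j<k. c j * x ^ gap_exp k j)"
  by (simp add: gap_poly_def poly_sum poly_monom)

lemma gap_exp_sumset:
  assumes "5 \<le> k" "e \<in> {..<2 * k - 1} \<union> {2 * k, 2 * k + 1}"
  shows "\<exists>j1<k. \<exists>j2<k. e = gap_exp k j1 + gap_exp k j2"
proof -
  have low: "gap_exp k j = j" if "j < k - 2" for j
    using that by (simp add: gap_exp_def)
  have high: "gap_exp k j = j + 2" if "k - 2 \<le> j" for j
    using that by (simp add: gap_exp_def)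
  consider "e \<le> k - 3" | "k - 2 \<le> e \<and> e \<le> k - 1" | "k \<le> e \<and> e \<le> 2 * k - 3"
    | "e = 2 * k - 2" | "e = 2 * k" | "e = 2 * k + 1"
    using assms by auto linarith
  then show ?thesis
  proof cases
    case 1
    then show ?thesis
      using assms low[of 0] low[of e] by (intro exI[of _ 0] conjI exI[of _ e]) auto
  next
    case 2
    then show ?thesis
      using assms low[of "k - 3"] low[of "e - (k - 3)"]
      by (intro exI[of _ "k - 3"] conjI exI[of _ "e - (k - 3)"]) auto
  next
    case 3
    then show ?thesis
      using assms high[of "k - 2"] low[of "e - k"]
      by (intro exI[of _ "k - 2"] conjI exI[of _ "e - k"]) auto
  next
    case 4
    then show ?thesis
      using assms high[of "k - 1"] low[of "k - 3"]
      by (intro exI[of _ "k - 1"] conjI exI[of _ "k - 3"]) auto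
  next
    case 5
    then show ?thesis
      using assms high[of "k - 2"] by (intro exI[of _ "k - 2"] conjI exI[of _ "k - 2"]) auto
  next
    case 6
    then show ?thesis
      using assms high[of "k - 2"] high[of "k - 1"]
      by (intro exI[of _ "k - 2"] conjI exI[of _ "k - 1"]) auto
  qed
qed

lemma card_roots_gap_poly_less:
  fixes \<alpha> :: "nat \<Rightarrow> 'a::field"
  assumes "finite A" "inj_on \<alpha> A" "3 \<le> k" "j < k" "c j \<noteq> 0"
    and nondegenerate: "\<And>S. S \<subseteq> A \<Longrightarrow> card S = k \<Longrightarrow>
      coeff (\<Prod>i\<in>S. [:- \<alpha> i, 1:]) (k - 2) ^ 2 \<noteq>
      coeff (\<Prod>i\<in>S. [:- \<alpha> i, 1:]) (k - 1) * coeff (\<Prod>i\<in>S. [:- \<alpha> i, 1:]) (k - 3)"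
  shows "card {i \<in> A. poly (gap_poly k c) (\<alpha> i) = 0} < k"
proof (rule ccontr)
  assume "\<not> card {i \<in> A. poly (gap_poly k c) (\<alpha> i) = 0} < k"
  then obtain S where S: "S \<subseteq> {i \<in> A. poly (gap_poly k c) (\<alpha> i) = 0}" "card S = k"
    by (meson not_less obtain_subset_with_card_n)
  then have "S \<subseteq> A"
    by auto
  then have "finite S"
    using \<open>finite A\<close> finite_subset by blast
  define P where "P = (\<Prod>i\<in>S. [:- \<alpha> i, 1:])"
  have "P dvd gap_poly k c"
    unfolding P_def using S \<open>finite S\<close> inj_on_subset[OF \<open>inj_on \<alpha> A\<close> \<open>S \<subseteq> A\<close>]
    by (intro prod_linear_factors_dvd) auto
  then obtain h where h: "gap_poly k c = P * h"
    by (elim dvdE)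
  have "gap_poly k c \<noteq> 0"
    using coeff_gap_poly_gap_exp[OF \<open>j < k\<close>, of c] \<open>c j \<noteq> 0\<close> by auto
  then have "P \<noteq> 0" "h \<noteq> 0"
    using h by auto
  have "degree P = k"
    using S(2) by (simp add: P_def degree_prod_sum_eq)
  then have "k + degree h \<le> k + 1"
    using degree_gap_poly[of k c] \<open>P \<noteq> 0\<close> \<open>h \<noteq> 0\<close> by (simp add: h degree_mult_eq)
  moreover have "k - 1 = Suc (Suc (k - 3))" "k - 2 = Suc (k - 3)"
    using \<open>3 \<le> k\<close> by simp_all
  ultimately have "h = 0"
    using nondegenerate[OF \<open>S \<subseteq> A\<close> S(2)] coeff_gap_poly_gap[of _ k c]
    by (intro linear_multiple_gap_eq_0[of h P "k - 3"]) (auto simp: h P_def)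
  then show False
    using \<open>h \<noteq> 0\<close> by simp
qed


section \<open>Codes generated by a matrix\<close>

lemma card_field_ge_2: "2 \<le> CARD('a::{finite,field})"
proof -
  have "card {0, 1 :: 'a} \<le> CARD('a)"
    by (rule card_mono) auto
  then show ?thesis
    by simp
qed

interpretation word: vector_space "cscale :: 'a::field \<Rightarrow> (nat \<Rightarrow> 'a) \<Rightarrow> nat \<Rightarrow> 'a"
  by unfold_locales (auto simp: cscale_def fun_eq_iff algebra_simps)

lemma sum_fun_apply: "(\<Sum>x\<in>A. f x) i = (\<Sum>x\<in>A. f x i)"
  by (induction A rule: infinite_finite_induct) auto

definition comb_word :: "nat \<Rightarrow> nat \<Rightarrow> (nat \<Rightarrow> nat \<Rightarrow> 'a::field) \<Rightarrow> (nat \<Rightarrow> 'a) \<Rightarrow> nat \<Rightarrow> 'a" where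
  "comb_word n K row c = (\<lambda>i. if i < n then \<Sum>j<K. c j * row j i else 0)"

lemma gen_code_eq_range: "gen_code n K row = range (comb_word n K row)"
  by (auto simp: gen_code_def comb_word_def)

lemma comb_word_cong: "(\<And>j. j < K \<Longrightarrow> c j = d j) \<Longrightarrow> comb_word n K row c = comb_word n K row d"
  by (auto simp: comb_word_def)

lemma comb_word_diff:
  "comb_word n K row c - comb_word n K row d = comb_word n K row (\<lambda>j. c j - d j)"
  by (auto simp: comb_word_def fun_eq_iff sum_subtractf algebra_simps)

lemma comb_word_unit:
  "j < K \<Longrightarrow> comb_word n K row (\<lambda>j'. of_bool (j' = j)) = (\<lambda>i. if i < n then row j i else 0)"
  by (simp add: comb_word_def if_distrib[of "\<lambda>x. x * _"] sum.delta cong: if_cong)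

lemma comb_word_eq_sum_units:
  "comb_word n K row c = (\<Sum>j<K. cscale (c j) (comb_word n K row (\<lambda>j'. of_bool (j' = j))))"
  by (auto simp: fun_eq_iff sum_fun_apply cscale_def comb_word_unit) (simp add: comb_word_def)

lemma is_linear_code_gen_code: "is_linear_code n (gen_code n K row)"
proof -
  have "comb_word n K row c + comb_word n K row d = comb_word n K row (\<lambda>j. c j + d j)" for c d
    by (auto simp: comb_word_def fun_eq_iff sum.distrib algebra_simps)
  moreover have "cscale a (comb_word n K row c) = comb_word n K row (\<lambda>j. a * c j)" for a c
    by (auto simp: comb_word_def cscale_def fun_eq_iff sum_distrib_left algebra_simps)
  moreover have "0 = comb_word n K row (\<lambda>_. 0)"
    by (auto simp: comb_word_def fun_eq_iff)
  ultimately show ?thesis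
    unfolding is_linear_code_def gen_code_eq_range by (auto simp: comb_word_def)
qed

lemma gen_code_eq_image_PiE: "gen_code n K row = comb_word n K row ` PiE {..<K} (\<lambda>_. UNIV)"
proof -
  have "comb_word n K row c \<in> comb_word n K row ` PiE {..<K} (\<lambda>_. UNIV)" for c
  proof -
    have "comb_word n K row c = comb_word n K row (restrict c {..<K})"
      by (rule comb_word_cong) simp
    then show ?thesis
      by (intro image_eqI[of _ "comb_word n K row" "restrict c {..<K}"]) simp_all
  qed
  then show ?thesis
    unfolding gen_code_eq_range by auto
qed

lemma finite_gen_code: "finite (gen_code n K (row :: nat \<Rightarrow> nat \<Rightarrow> 'a::{finite,field}))"
  unfolding gen_code_eq_image_PiE by (intro finite_imageI finite_PiE) auto

lemma card_gen_code_le: "card (gen_code n K (row :: nat \<Rightarrow> nat \<Rightarrow> 'a::{finite,field})) \<le> CARD('a) ^ K"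
  unfolding gen_code_eq_image_PiE
  using card_image_le[of "PiE {..<K} (\<lambda>_. UNIV :: 'a set)" "comb_word n K row"]
  by (simp add: card_PiE finite_PiE)

lemma hdist_le: "hdist n x y \<le> n"
  unfolding hdist_def using card_mono[OF finite_lessThan, of "{i. i < n \<and> x i \<noteq> y i}" n] by auto

context
  fixes n K :: nat and row :: "nat \<Rightarrow> nat \<Rightarrow> 'a::{finite,field}"
  assumes K: "0 < K" "K \<le> n"
    and few_zeros: "\<And>c j. j < K \<Longrightarrow> c j \<noteq> 0 \<Longrightarrow> card {i \<in> {..<n}. (\<Sum>j<K. c j * row j i) = 0} < K"
begin

lemma comb_word_eq_zero_imp:
  assumes "comb_word n K row c = 0" "j < K"
  shows "c j = 0"
proof (rule ccontr)
  assume "c j \<noteq> 0"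
  have "(\<Sum>j<K. c j * row j i) = 0" if "i < n" for i
    using fun_cong[OF assms(1), of i] that by (simp add: comb_word_def)
  then have "{i \<in> {..<n}. (\<Sum>j<K. c j * row j i) = 0} = {..<n}"
    by auto
  then show False
    using few_zeros[of j c] \<open>j < K\<close> \<open>c j \<noteq> 0\<close> K by simp
qed

lemma comb_word_eq_imp:
  assumes "comb_word n K row c = comb_word n K row d" "j < K"
  shows "c j = d j"
  using comb_word_eq_zero_imp[of "\<lambda>j. c j - d j" j] assms
  by (simp add: comb_word_diff[symmetric])

lemma code_dim_gen_code: "code_dim (gen_code n K row) = K"
proof -
  define b where "b j = comb_word n K row (\<lambda>j'. of_bool (j' = j))" for j
  define B where "B = b ` {..<K}"
  have inj: "inj_on b {..<K}"
  proof (rule inj_onI)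
    fix j1 j2
    assume "j1 \<in> {..<K}" "b j1 = b j2"
    then have "of_bool (j1 = j1) = (of_bool (j1 = j2) :: 'a)"
      unfolding b_def by (intro comb_word_eq_imp) auto
    then show "j1 = j2"
      by (auto split: if_splits)
  qed
  have sum_b: "comb_word n K row c = (\<Sum>j<K. cscale (c j) (b j))" for c
    unfolding b_def by (rule comb_word_eq_sum_units)
  have "B \<subseteq> gen_code n K row"
    by (auto simp: B_def b_def gen_code_eq_range)
  moreover have "gen_code n K row \<subseteq> word.span B"
  proof
    fix x
    assume "x \<in> gen_code n K row"
    then obtain c where "x = (\<Sum>j<K. cscale (c j) (b j))"
      by (auto simp: gen_code_eq_range sum_b)
    then show "x \<in> word.span B"
      by (simp only:) (intro word.span_sum word.span_scale word.span_base, simp add: B_def)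
  qed
  moreover have "word.independent B"
  proof
    assume "word.dependent B"
    then obtain u where u: "\<exists>v\<in>B. u v \<noteq> 0" "(\<Sum>v\<in>B. cscale (u v) v) = 0"
      using word.dependent_finite[of B] by (auto simp: B_def)
    have "(\<Sum>v\<in>B. cscale (u v) v) = comb_word n K row (\<lambda>j. u (b j))"
      by (simp add: B_def sum.reindex[OF inj] sum_b)
    then have "u (b j) = 0" if "j < K" for j
      using u(2) comb_word_eq_zero_imp that by simp
    then show False
      using u(1) by (auto simp: B_def)
  qed
  moreover have "card B = K"
    by (simp add: B_def card_image[OF inj])
  ultimately show ?thesis
    unfolding code_dim_def by (rule word.dim_unique)
qed

lemma card_gen_code: "card (gen_code n K row) = CARD('a) ^ K"
proof -
  have "inj_on (comb_word n K row) (PiE {..<K} (\<lambda>_. UNIV))"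
  proof (rule inj_onI)
    fix c d
    assume cd: "c \<in> PiE {..<K} (\<lambda>_. UNIV)" "d \<in> PiE {..<K} (\<lambda>_. UNIV)"
      and "comb_word n K row c = comb_word n K row d"
    then show "c = d"
      using comb_word_eq_imp by (intro PiE_ext[OF cd]) auto
  qed
  then show ?thesis
    unfolding gen_code_eq_image_PiE by (simp add: card_image card_PiE)
qed

lemma hdist_gen_code_ge:
  assumes "x \<in> gen_code n K row" "y \<in> gen_code n K row" "x \<noteq> y"
  shows "n - K + 1 \<le> hdist n x y"
proof -
  obtain c d where x: "x = comb_word n K row c" and y: "y = comb_word n K row d"
    using assms(1,2) by (auto simp: gen_code_eq_range)
  obtain j where "j < K" "c j - d j \<noteq> 0"
    using assms(3) comb_word_cong[of K c d] by (auto simp: x y)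
  define Z where "Z = {i \<in> {..<n}. (\<Sum>j<K. (c j - d j) * row j i) = 0}"
  have "card Z < K"
    unfolding Z_def by (rule few_zeros) fact+
  have "x i - y i = (\<Sum>j<K. (c j - d j) * row j i)" if "i < n" for i
    using that by (simp add: x y comb_word_def sum_subtractf left_diff_distrib)
  then have "{i. i < n \<and> x i \<noteq> y i} = {..<n} - Z"
    by (auto simp: Z_def) (metis right_minus_eq)+
  moreover have "Z \<subseteq> {..<n}"
    by (auto simp: Z_def)
  ultimately have "hdist n x y = n - card Z"
    by (simp add: hdist_def card_Diff_subset finite_subset)
  then show ?thesis
    using \<open>card Z < K\<close> K by linarith
qed

lemma hdist_gen_code_le:
  obtains x y where "x \<in> gen_code n K row" "y \<in> gen_code n K row" "x \<noteq> y" "hdist n x y \<le> n - K + 1"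
proof -
  define C where "C = gen_code n K row"
  define prefix where "prefix x = restrict x {..<K - 1}" for x :: "nat \<Rightarrow> 'a"
  have "card (prefix ` C) \<le> card (PiE {..<K - 1} (\<lambda>_. UNIV :: 'a set))"
    by (rule card_mono) (simp_all add: prefix_def image_subset_iff finite_PiE)
  also have "\<dots> < card C"
    using card_field_ge_2[where 'a = 'a] K by (simp add: card_PiE C_def card_gen_code)
  finally have "\<not> inj_on prefix C"
    using card_image by fastforce
  then obtain x y where xy: "x \<in> C" "y \<in> C" "x \<noteq> y" "prefix x = prefix y"
    by (auto simp: inj_on_def)
  have "{i. i < n \<and> x i \<noteq> y i} \<subseteq> {K - 1..<n}"
  proof clarify
    fix i
    assume "i < n" "x i \<noteq> y i"
    moreover have "x i = y i" if "i < K - 1"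
      using fun_cong[OF xy(4), of i] that by (simp add: prefix_def)
    ultimately show "i \<in> {K - 1..<n}"
      by force
  qed
  then have "hdist n x y \<le> card {K - 1..<n}"
    unfolding hdist_def by (rule card_mono[rotated]) simp
  also have "\<dots> = n - K + 1"
    using K by simp
  finally show ?thesis
    using xy that by (simp add: C_def)
qed

lemma is_MDS_gen_code: "is_MDS n K (gen_code n K row)"
proof -
  define D where "D = {hdist n x y | x y. x \<in> gen_code n K row \<and> y \<in> gen_code n K row \<and> x \<noteq> y}"
  have "finite D"
    by (rule finite_subset[of _ "{..n}"]) (auto simp: D_def hdist_le)
  obtain x y where "x \<in> gen_code n K row" "y \<in> gen_code n K row" "x \<noteq> y" "hdist n x y \<le> n - K + 1"
    by (rule hdist_gen_code_le)
  then have "n - K + 1 \<in> D"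
    unfolding D_def using hdist_gen_code_ge le_antisym by blast
  then have "Min D = n - K + 1"
    using \<open>finite D\<close> hdist_gen_code_ge by (intro Min_eqI) (auto simp: D_def)
  then show ?thesis
    unfolding is_MDS_def min_dist_def D_def[symmetric]
    using is_linear_code_gen_code code_dim_gen_code by simp
qed

end


section \<open>Codes that are not generalized Reed-Solomon\<close>

lemma card_degree_less:
  assumes "0 < d"
  shows "card {f :: 'a::{finite,comm_ring_1} poly. degree f < d} = CARD('a) ^ d"
proof -
  define F where "F c = (\<Sum>i<d. monom (c i) i)" for c :: "nat \<Rightarrow> 'a"
  have coeff_F: "coeff (F c) j = (if j < d then c j else 0)" for c j
    by (simp add: F_def coeff_sum coeff_monom)
  have "bij_betw F (PiE {..<d} (\<lambda>_. UNIV)) {f. degree f < d}"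
  proof (rule bij_betw_byWitness[where f' = "\<lambda>f. restrict (coeff f) {..<d}"])
    show "\<forall>c\<in>PiE {..<d} (\<lambda>_. UNIV). restrict (coeff (F c)) {..<d} = c"
    proof
      fix c :: "nat \<Rightarrow> 'a"
      assume c: "c \<in> PiE {..<d} (\<lambda>_. UNIV)"
      show "restrict (coeff (F c)) {..<d} = c"
      proof
        fix j
        show "restrict (coeff (F c)) {..<d} j = c j"
          using PiE_arb[OF c, of j] by (simp add: coeff_F)
      qed
    qed
    show "\<forall>f\<in>{f. degree f < d}. F (restrict (coeff f) {..<d}) = f"
    proof
      fix f :: "'a poly"
      assume "f \<in> {f. degree f < d}"
      then show "F (restrict (coeff f) {..<d}) = f"
        by (intro poly_eqI) (simp add: coeff_F coeff_eq_0)
    qed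
    show "F ` PiE {..<d} (\<lambda>_. UNIV) \<subseteq> {f. degree f < d}"
    proof (rule image_subsetI)
      fix c
      show "F c \<in> {f. degree f < d}"
        using assms by (simp add: degree_lessI coeff_F)
    qed
    show "(\<lambda>f. restrict (coeff f) {..<d}) ` {f. degree f < d} \<subseteq> PiE {..<d} (\<lambda>_. UNIV)"
      by (simp add: image_subset_iff)
  qed
  then have "card (PiE {..<d} (\<lambda>_. UNIV :: 'a set)) = card {f :: 'a poly. degree f < d}"
    by (rule bij_betw_same_card)
  then show ?thesis
    by (simp add: card_PiE)
qed

definition eval_word :: "nat \<Rightarrow> (nat \<Rightarrow> 'a::comm_ring_1) \<Rightarrow> (nat \<Rightarrow> 'a) \<Rightarrow> 'a poly \<Rightarrow> nat \<Rightarrow> 'a" where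
  "eval_word n a w f = (\<lambda>i. if i < n then w i * poly f (a i) else 0)"

lemma GRS_eq_image_eval_word: "GRS n k a w = eval_word n a w ` {f. f = 0 \<or> degree f < k}"
  by (auto simp: GRS_def eval_word_def)

lemma inj_on_eval_word:
  fixes a :: "nat \<Rightarrow> 'a::field"
  assumes "is_GRS_params n a w"
  shows "inj_on (eval_word n a w) {f. degree f < n}"
proof (rule inj_onI)
  fix f g
  assume deg: "f \<in> {f. degree f < n}" "g \<in> {f. degree f < n}"
    and eq: "eval_word n a w f = eval_word n a w g"
  have "poly f (a i) = poly g (a i)" if "i < n" for i
    using fun_cong[OF eq, of i] that assms by (auto simp: eval_word_def is_GRS_params_def)
  then have "poly f x = poly g x" if "x \<in> a ` {..<n}" for x
    using that by auto
  moreover have "card (a ` {..<n}) = n"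
    using assms by (simp add: is_GRS_params_def card_image)
  ultimately show "f = g"
    using deg by (intro poly_eqI_degree[of "a ` {..<n}"]) auto
qed

lemma GRS_equiv_gen_code_rows:
  fixes row :: "nat \<Rightarrow> nat \<Rightarrow> 'a::{finite,field}"
  assumes par: "is_GRS_params n a w" and equiv: "code_equiv n (gen_code n K row) (GRS n k' a w)"
    and "0 < K" "K < n"
  obtains \<sigma> c where "\<sigma> permutes {..<n}" "\<And>i. i < n \<Longrightarrow> c i \<noteq> 0"
    "\<And>j. j < K \<Longrightarrow> \<exists>h. degree h < K \<and> (\<forall>i<n. c i * row j (\<sigma> i) = w i * poly h (a i))"
proof -
  obtain \<sigma> c where \<sigma>: "\<sigma> permutes {..<n}" and c: "\<forall>i<n. c i \<noteq> 0"
    and GRS: "GRS n k' a w = (\<lambda>x i. if i < n then c i * x (\<sigma> i) else 0) ` gen_code n K row"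
    using equiv unfolding code_equiv_def by blast
  have "k' \<le> K"
  proof (rule ccontr)
    assume "\<not> k' \<le> K"
    then have "eval_word n a w ` {f. degree f < K + 1} \<subseteq> GRS n k' a w"
      by (auto simp: GRS_eq_image_eval_word)
    then have "card (eval_word n a w ` {f. degree f < K + 1}) \<le> card (GRS n k' a w)"
      by (rule card_mono[rotated]) (simp add: GRS finite_gen_code)
    also have "\<dots> \<le> CARD('a) ^ K"
      unfolding GRS using card_image_le[OF finite_gen_code] card_gen_code_le le_trans by blast
    also have "inj_on (eval_word n a w) {f. degree f < K + 1}"
      by (rule inj_on_subset[OF inj_on_eval_word[OF par]]) (use \<open>K < n\<close> in auto)
    then have "card (eval_word n a w ` {f. degree f < K + 1}) = CARD('a) ^ (K + 1)"
      by (simp add: card_image card_degree_less)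
    finally show False
      using card_field_ge_2[where 'a = 'a] by simp
  qed
  have "\<exists>h. degree h < K \<and> (\<forall>i<n. c i * row j (\<sigma> i) = w i * poly h (a i))" if "j < K" for j
  proof -
    define x where "x = comb_word n K row (\<lambda>j'. of_bool (j' = j))"
    have "x \<in> gen_code n K row"
      by (simp add: x_def gen_code_eq_range)
    moreover have "(\<lambda>i. if i < n then c i * row j (\<sigma> i) else 0) = (\<lambda>i. if i < n then c i * x (\<sigma> i) else 0)"
      using permutes_in_image[OF \<sigma>] comb_word_unit[OF \<open>j < K\<close>, of n row]
      by (auto simp: x_def fun_eq_iff)
    ultimately have "(\<lambda>i. if i < n then c i * row j (\<sigma> i) else 0) \<in> GRS n k' a w"
      unfolding GRS by blast
    then obtain h where h: "h = 0 \<or> degree h < k'"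
      and eq: "(\<lambda>i. if i < n then c i * row j (\<sigma> i) else 0) = eval_word n a w h"
      unfolding GRS_eq_image_eval_word by blast
    have "c i * row j (\<sigma> i) = w i * poly h (a i)" if "i < n" for i
      using fun_cong[OF eq, of i] that by (simp add: eval_word_def)
    moreover have "degree h < K"
      using h \<open>k' \<le> K\<close> \<open>0 < K\<close> by auto
    ultimately show ?thesis
      by blast
  qed
  then show ?thesis
    using that \<sigma> c by blast
qed

lemma card_le_if_monomials_represented:
  fixes \<beta> a :: "nat \<Rightarrow> 'a::{finite,field}"
  assumes "inj_on \<beta> {..<n}" "\<And>i. i < n \<Longrightarrow> u i \<noteq> 0" "T \<subseteq> {..<n}" "0 < D"
    and rep: "\<And>e. e \<in> T \<Longrightarrow> \<exists>H. degree H < D \<and> (\<forall>i<n. u i * \<beta> i ^ e = v i * poly H (a i))"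
  shows "card T \<le> D"
proof -
  obtain H where H: "\<And>e. e \<in> T \<Longrightarrow> degree (H e) < D"
    and H_rep: "\<And>e i. e \<in> T \<Longrightarrow> i < n \<Longrightarrow> u i * \<beta> i ^ e = v i * poly (H e) (a i)"
    using rep by metis
  have "finite T"
    using \<open>T \<subseteq> {..<n}\<close> finite_subset by blast
  define \<Phi> where "\<Phi> c = (\<Sum>e\<in>T. smult (c e) (H e))" for c
  have "inj_on \<Phi> (PiE T (\<lambda>_. UNIV))"
  proof (rule inj_onI)
    fix c c'
    assume cc': "c \<in> PiE T (\<lambda>_. UNIV)" "c' \<in> PiE T (\<lambda>_. UNIV)" and eq: "\<Phi> c = \<Phi> c'"
    define F where "F = (\<Sum>e\<in>T. monom (c e - c' e) e)"
    have coeff_F: "coeff F e = (if e \<in> T then c e - c' e else 0)" for e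
      using \<open>finite T\<close> by (simp add: F_def coeff_sum coeff_monom)
    have "poly F (\<beta> i) = 0" if "i < n" for i
    proof -
      have "u i * poly F (\<beta> i) = (\<Sum>e\<in>T. (c e - c' e) * (u i * \<beta> i ^ e))"
        by (simp add: F_def poly_sum poly_monom sum_distrib_left algebra_simps)
      also have "\<dots> = (\<Sum>e\<in>T. (c e - c' e) * (v i * poly (H e) (a i)))"
        using H_rep that by simp
      also have "\<dots> = v i * (poly (\<Phi> c) (a i) - poly (\<Phi> c') (a i))"
        by (simp add: \<Phi>_def poly_sum sum_distrib_left sum_subtractf algebra_simps)
      finally show ?thesis
        using eq assms(2)[OF that] by simp
    qed
    have "c e = c' e" if "e \<in> T" for e
    proof -
      have "0 < n"
        using that \<open>T \<subseteq> {..<n}\<close> by auto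
      then have "degree F < n"
        using \<open>T \<subseteq> {..<n}\<close> by (intro degree_lessI) (auto simp: coeff_F)
      moreover have "card (\<beta> ` {..<n}) = n"
        using assms(1) by (simp add: card_image)
      ultimately have "F = 0"
        using \<open>\<And>i. i < n \<Longrightarrow> poly F (\<beta> i) = 0\<close> by (intro poly_eqI_degree[of "\<beta> ` {..<n}" F 0]) auto
      then show ?thesis
        using coeff_F[of e] that by simp
    qed
    then show "c = c'"
      using cc' by (intro PiE_ext) auto
  qed
  moreover have "\<Phi> ` PiE T (\<lambda>_. UNIV) \<subseteq> {f. degree f < D}"
  proof (rule image_subsetI)
    fix c
    have "degree (H e) \<le> D - 1" if "e \<in> T" for e
      using H[OF that] by linarith
    then have "degree (\<Phi> c) \<le> D - 1"
      unfolding \<Phi>_def by (intro degree_sum_le \<open>finite T\<close> order.trans[OF degree_smult_le])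
    then show "\<Phi> c \<in> {f. degree f < D}"
      using \<open>0 < D\<close> by simp
  qed
  moreover have "finite {f :: 'a poly. degree f < D}"
    using card_degree_less[OF \<open>0 < D\<close>, where 'a = 'a] by (intro card_ge_0_finite) simp
  ultimately have "card (PiE T (\<lambda>_. UNIV :: 'a set)) \<le> card {f :: 'a poly. degree f < D}"
    by (rule card_inj_on_le)
  then have "CARD('a) ^ card T \<le> CARD('a) ^ D"
    using \<open>finite T\<close> by (simp add: card_PiE card_degree_less[OF \<open>0 < D\<close>])
  then show ?thesis
    using card_field_ge_2[where 'a = 'a] by simp
qed

lemma non_GRS_monomial_code:
  fixes \<beta> :: "nat \<Rightarrow> 'a::{finite,field}"
  assumes "inj_on \<beta> {..<n}" "0 < k" "k < n" "T \<subseteq> {..<n}" "2 * k \<le> card T"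
    and sums: "\<And>e. e \<in> T \<Longrightarrow> \<exists>j1<k. \<exists>j2<k. e = E j1 + E j2"
  shows "non_GRS n (gen_code n k (\<lambda>j i. \<beta> i ^ E j))"
  unfolding non_GRS_def
proof (intro notI, elim exE conjE)
  fix k' a w
  assume "is_GRS_params n a w" "code_equiv n (gen_code n k (\<lambda>j i. \<beta> i ^ E j)) (GRS n k' a w)"
  then obtain \<sigma> c where \<sigma>: "\<sigma> permutes {..<n}" and c: "\<And>i. i < n \<Longrightarrow> c i \<noteq> 0"
    and rows: "\<And>j. j < k \<Longrightarrow> \<exists>h. degree h < k \<and> (\<forall>i<n. c i * \<beta> (\<sigma> i) ^ E j = w i * poly h (a i))"
    using GRS_equiv_gen_code_rows \<open>0 < k\<close> \<open>k < n\<close> by blast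
  have "\<exists>H. degree H < 2 * k - 1 \<and> (\<forall>i<n. (c i)\<^sup>2 * (\<beta> \<circ> \<sigma>) i ^ e = (w i)\<^sup>2 * poly H (a i))"
    if e: "e \<in> T" for e
  proof -
    obtain j1 j2 where j: "j1 < k" "j2 < k" "e = E j1 + E j2"
      using sums[OF e] by blast
    obtain h1 h2 where h: "degree h1 < k" "\<forall>i<n. c i * \<beta> (\<sigma> i) ^ E j1 = w i * poly h1 (a i)"
      "degree h2 < k" "\<forall>i<n. c i * \<beta> (\<sigma> i) ^ E j2 = w i * poly h2 (a i)"
      using rows[OF j(1)] rows[OF j(2)] by blast
    have "degree (h1 * h2) < 2 * k - 1"
      using degree_mult_le[of h1 h2] h(1,3) by linarith
    moreover have "(c i)\<^sup>2 * (\<beta> \<circ> \<sigma>) i ^ e = (w i)\<^sup>2 * poly (h1 * h2) (a i)" if "i < n" for i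
    proof -
      have "(c i)\<^sup>2 * (\<beta> \<circ> \<sigma>) i ^ e = (c i * \<beta> (\<sigma> i) ^ E j1) * (c i * \<beta> (\<sigma> i) ^ E j2)"
        by (simp add: j(3) power_add power2_eq_square)
      also have "\<dots> = (w i)\<^sup>2 * poly (h1 * h2) (a i)"
        using h(2,4) that by (simp add: power2_eq_square)
      finally show ?thesis .
    qed
    ultimately show ?thesis
      by blast
  qed
  moreover have "inj_on (\<beta> \<circ> \<sigma>) {..<n}"
    by (rule comp_inj_on[OF permutes_inj_on[OF \<sigma>]]) (simp add: permutes_image[OF \<sigma>] assms(1))
  ultimately have "card T \<le> 2 * k - 1"
    using c \<open>T \<subseteq> {..<n}\<close> \<open>0 < k\<close>
    by (intro card_le_if_monomials_represented[where u = "\<lambda>i. (c i)\<^sup>2" and v = "\<lambda>i. (w i)\<^sup>2" and a = a])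
      auto
  then show False
    using \<open>2 * k \<le> card T\<close> \<open>0 < k\<close> by linarith
qed


theorem theorem3p8:
  fixes p m n k t :: nat and \<gamma> :: "'a::{finite,field}"
    and g :: "nat \<Rightarrow> 'a poly"
  assumes "prime p" and "CHAR('a) = p" and "CARD('a) = p ^ m"
    and "generates_over_prime_field \<gamma>"
    and "t = (m - 1) div 4"
    and "5 \<le> k" and "2 * k \<le> n - 2" and "n \<le> p ^ t"
    and "\<forall>i<n. Fp_poly (g i) \<and> lead_coeff (g i) = 1 \<and> degree (g i) = t"
    and "inj_on g {..<n}"
    and "\<not> p dvd (k^2 * (k^2 - 1) div 12)"
  shows "let \<alpha> = (\<lambda>i. poly (g i) \<gamma>);
             E = (\<lambda>j. if j < k - 2 then j else j + 2);
             C = gen_code n k (\<lambda>j i. \<alpha> i ^ E j)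
         in is_MDS n k C \<and> non_GRS n C"
proof -
  note gen = assms(1-4)
  define \<alpha> where "\<alpha> i = poly (g i) \<gamma>" for i
  have "t \<noteq> 0"
    using assms(6-8) by (cases "t = 0") auto
  then have "4 * t < m"
    using assms(5) by linarith
  have g: "Ints_coeffs (g i) \<and> degree (g i) \<le> t \<and> coeff (g i) t = 1" if "i \<in> {..<n}" for i
    using assms(9) that by (auto simp: Fp_poly_imp_Ints_coeffs)
  have inj: "inj_on \<alpha> {..<n}"
    unfolding \<alpha>_def using \<open>4 * t < m\<close> g assms(10)
    by (intro inj_on_poly_at_generator[OF gen, of t]) auto
  have "coeff (\<Prod>i\<in>S. [:- \<alpha> i, 1:]) (k - 2) ^ 2 \<noteq>
      coeff (\<Prod>i\<in>S. [:- \<alpha> i, 1:]) (k - 1) * coeff (\<Prod>i\<in>S. [:- \<alpha> i, 1:]) (k - 3)"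
    if "S \<subseteq> {..<n}" "card S = k" for S
    unfolding \<alpha>_def using that g finite_subset[OF that(1)] assms(6,11)
    by (intro discriminant_at_generator_nonzero[OF gen \<open>4 * t < m\<close>]) auto
  then have "card {i \<in> {..<n}. (\<Sum>j<k. c j * \<alpha> i ^ gap_exp k j) = 0} < k"
    if "j < k" "c j \<noteq> 0" for c j
    using card_roots_gap_poly_less[OF finite_lessThan inj, of k j c] assms(6) that
    by (simp add: poly_gap_poly)
  then have "is_MDS n k (gen_code n k (\<lambda>j i. \<alpha> i ^ gap_exp k j))"
    using assms(6,7) by (intro is_MDS_gen_code) auto
  moreover have "non_GRS n (gen_code n k (\<lambda>j i. \<alpha> i ^ gap_exp k j))"
    using gap_exp_sumset[OF assms(6)] assms(6,7)
    by (intro non_GRS_monomial_code[OF inj, where T = "{..<2 * k - 1} \<union> {2 * k, 2 * k + 1}"]) auto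
  ultimately show ?thesis
    unfolding \<alpha>_def gap_exp_def Let_def by simp
qed

end
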